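(* Let $S=\{p_1,\dots,p_n\}$ be a set of $n$ distinct primes. The spectrum of $\mathbf{U}_S$ on $\mathcal{H}^n$ is the set \[\{p_1^{k_1}\cdots p_n^{k_n}\,:\,k_j\in\mathbb{N}=\{0,1,2,\dots\}\text{ for every }j\},\] and each eigenvalue has multiplicity $1$.
   Context: For a power series $f(x)=\sum_{n\ge0}a_nx^n$ and a positive integer $q$, $U_qf(x)=\sum_{n\ge0}a_{qn}x^n$. For $k\in\mathbb{N}$ let $\phi_k(x)=(x\frac{d}{dx})^k\big(\frac{1}{1-x}\big)$, and let $\mathcal{V}$ be the complex span of $\phi_0,\phi_1,\dots$. Let $\mathcal{H}^n=\mathcal{V}\otimes\cdots\otimes\mathcal{V}$ ($n$ factors), where $f_1\otimes\cdots\otimes f_n$ is identified with the function $f_1(x_1)\cdots f_n(x_n)$. The operator $\mathbf{U}_S=U_{p_1}\otimes\cdots\otimes U_{p_n}$ is defined by $\mathbf{U}_S(f_1\otimes\cdots\otimes f_n)(x_1,\dots,x_n)=(U_{p_1}f_1)(x_1)\cdots(U_{p_n}f_n)(x_n)$, extended linearly. The spectrum is the set of $\lambda$ with $\mathbf{U}_SF=\lambda F$ for some nonzero $F\in\mathcal{H}^n$; the multiplicity of $\lambda$ is the dimension of its eigenspace. *)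

theory Defs
  imports "HOL-Computational_Algebra.Computational_Algebra"
begin

definition xD :: "complex fps \<Rightarrow> complex fps" where
  "xD f = fps_X * fps_deriv f"

definition phi :: "nat \<Rightarrow> complex fps" where
  "phi k = (xD ^^ k) (inverse (1 - fps_X))"

definition U :: "nat \<Rightarrow> complex fps \<Rightarrow> complex fps" where
  "U q f = Abs_fps (\<lambda>n. f $ (q * n))"

text \<open>A power series in the variables x_j (j ranging over the finite index type 'n)
  is represented by its coefficient function on multi-indices 'n => nat.
  The elementary tensor f_1 (x) ... (x) f_n is the product f_1(x_1)...f_n(x_n).\<close>

definition tensor :: "('n \<Rightarrow> complex fps) \<Rightarrow> (('n::finite \<Rightarrow> nat) \<Rightarrow> complex)" where
  "tensor fs = (\<lambda>m. \<Prod>j\<in>UNIV. fs j $ m j)"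

definition cspan :: "(('n \<Rightarrow> nat) \<Rightarrow> complex) set \<Rightarrow> (('n \<Rightarrow> nat) \<Rightarrow> complex) set" where
  "cspan B = {F. \<exists>K c. finite K \<and> K \<subseteq> B \<and> F = (\<lambda>m. \<Sum>v\<in>K. c v * v m)}"

definition Hn :: "(('n::finite \<Rightarrow> nat) \<Rightarrow> complex) set" where
  "Hn = cspan {tensor (\<lambda>j. phi (k j)) | k. True}"

text \<open>U_S = U_{p_1} (x) ... (x) U_{p_n}, acting on coefficients; on elementary tensors it
  is tensor (\<lambda>j. U (p j) (fs j)), and it is the linear extension of that.\<close>
definition US :: "('n::finite \<Rightarrow> nat) \<Rightarrow> (('n \<Rightarrow> nat) \<Rightarrow> complex) \<Rightarrow> (('n \<Rightarrow> nat) \<Rightarrow> complex)" where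
  "US p F = (\<lambda>m. F (\<lambda>j. p j * m j))"

definition eigenspace :: "('n::finite \<Rightarrow> nat) \<Rightarrow> complex \<Rightarrow> (('n \<Rightarrow> nat) \<Rightarrow> complex) set" where
  "eigenspace p mu = {F \<in> Hn. US p F = (\<lambda>m. mu * F m)}"

definition spectrum_US :: "('n::finite \<Rightarrow> nat) \<Rightarrow> complex set" where
  "spectrum_US p = {mu. \<exists>F \<in> eigenspace p mu. F \<noteq> (\<lambda>_. 0)}"

lemma US_tensor: "US p (tensor fs) = tensor (\<lambda>j. U (p j) (fs j))"
  by (simp add: US_def tensor_def U_def)

end

theory Submission
  imports Defs
begin

text \<open>Since \<open>phi k\<close> has coefficients \<open>n ^ k\<close>, the space \<open>H^n\<close> is spanned by the coefficient
  functions \<open>m \<mapsto> \<Prod>j. m j ^ k j\<close>. The operator \<open>U_S\<close> evaluates a coefficient function at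
  \<open>(p j * m j)\<close>, so it multiplies the monomial of exponent \<open>k\<close> by \<open>\<Prod>j. p j ^ k j\<close>. By unique
  factorisation these eigenvalues are pairwise distinct, and eigenvectors for distinct
  eigenvalues are linearly independent; hence every eigenvector of \<open>U_S\<close> is a multiple of a
  single monomial.\<close>

lemma xD_nth: "xD f $ n = of_nat n * f $ n"
  by (cases n) (simp_all add: xD_def)

lemma phi_nth: "phi k $ n = of_nat n ^ k"
  by (induction k) (simp_all add: phi_def xD_nth fps_inverse_one_minus_fps_X)

lemma cspan_superset: "v \<in> B \<Longrightarrow> v \<in> cspan B"
  unfolding cspan_def by (rule CollectI, intro exI[of _ "{v}"] exI[of _ "\<lambda>_. 1"]) simp

lemma cspan_imageE:
  assumes "F \<in> cspan (f ` A)"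
  obtains K c where "finite K" "K \<subseteq> A" "F = (\<lambda>m. \<Sum>k\<in>K. c k * f k m)"
proof -
  obtain V d where V: "finite V" "V \<subseteq> f ` A" and F: "F = (\<lambda>m. \<Sum>v\<in>V. d v * v m)"
    using assms unfolding cspan_def by blast
  define K where "K = inv_into A f ` V"
  have "(\<Sum>v\<in>V. d v * v m) = (\<Sum>k\<in>K. d (f k) * f k m)" for m
    unfolding K_def using V(2)
    by (subst sum.reindex) (auto simp: inj_on_inv_into f_inv_into_f intro!: sum.cong)
  moreover have "finite K" "K \<subseteq> A"
    using V by (auto simp: K_def inv_into_into)
  ultimately show thesis
    using that[of K "\<lambda>k. d (f k)"] F by simp
qed

lemma eigenfunctions_independent:
  fixes v :: "'i \<Rightarrow> 'a \<Rightarrow> 'b::field" and \<sigma> :: "'a \<Rightarrow> 'a"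
  assumes "finite K" and "inj_on l K"
    and eigen: "\<And>k x. k \<in> K \<Longrightarrow> v k (\<sigma> x) = l k * v k x"
    and nonzero: "\<And>k. k \<in> K \<Longrightarrow> v k \<noteq> (\<lambda>_. 0)"
    and vanish: "\<And>x. (\<Sum>k\<in>K. c k * v k x) = 0"
  shows "\<forall>k\<in>K. c k = 0"
  using assms
proof (induction K arbitrary: c rule: finite_induct)
  case empty
  then show ?case by simp
next
  case (insert k0 K)
  have split: "c k0 * v k0 x + (\<Sum>k\<in>K. c k * v k x) = 0" for x
    using "insert.hyps" "insert.prems"(4)[of x] by simp
  have "(\<Sum>k\<in>K. (c k * (l k - l k0)) * v k x) = 0" for x
  proof -
    have "(\<Sum>k\<in>K. (c k * (l k - l k0)) * v k x)
        = (c k0 * v k0 (\<sigma> x) + (\<Sum>k\<in>K. c k * v k (\<sigma> x)))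
          - l k0 * (c k0 * v k0 x + (\<Sum>k\<in>K. c k * v k x))"
      using "insert.prems"(2)
      by (simp add: algebra_simps sum_distrib_left sum_subtractf)
    also have "\<dots> = 0"
      using split by simp
    finally show ?thesis .
  qed
  then have "c k * (l k - l k0) = 0" if "k \<in> K" for k
    using "insert.IH"[of "\<lambda>k. c k * (l k - l k0)"] "insert.prems"(1-3) that by auto
  moreover have "l k \<noteq> l k0" if "k \<in> K" for k
    using "insert.prems"(1) "insert.hyps"(2) that by (auto simp: image_iff)
  ultimately have rest: "\<forall>k\<in>K. c k = 0"
    by simp
  then have "c k0 * v k0 x = 0" for x
    using split[of x] by simp
  then have "c k0 = 0"
    using "insert.prems"(3)[of k0] by auto
  with rest show ?case
    by simp
qed

definition monomial_fun :: "('n::finite \<Rightarrow> nat) \<Rightarrow> ('n \<Rightarrow> nat) \<Rightarrow> complex" where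
  "monomial_fun k m = (\<Prod>j\<in>UNIV. of_nat (m j) ^ k j)"

definition power_prod :: "('n::finite \<Rightarrow> nat) \<Rightarrow> ('n \<Rightarrow> nat) \<Rightarrow> nat" where
  "power_prod p k = (\<Prod>j\<in>UNIV. p j ^ k j)"

lemma tensor_phi: "tensor (\<lambda>j. phi (k j)) = monomial_fun k"
  by (simp add: tensor_def monomial_fun_def phi_nth fun_eq_iff)

lemma Hn_eq_cspan_monomial_fun: "Hn = cspan (range monomial_fun)"
proof -
  have "{tensor (\<lambda>j. phi (k j)) | k. True} = range monomial_fun"
    by (auto simp: tensor_phi)
  then show ?thesis
    unfolding Hn_def by (rule arg_cong)
qed

lemma monomial_fun_scale:
  "monomial_fun k (\<lambda>j. p j * m j) = of_nat (power_prod p k) * monomial_fun k m"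
  by (simp add: monomial_fun_def power_prod_def power_mult_distrib prod.distrib)

lemma monomial_fun_nonzero: "monomial_fun k \<noteq> (\<lambda>_. 0)"
proof
  assume "monomial_fun k = (\<lambda>_. 0)"
  then have "monomial_fun k (\<lambda>_. 1) = 0" by simp
  then show False by (simp add: monomial_fun_def)
qed

lemma monomial_fun_in_eigenspace:
  "monomial_fun k \<in> eigenspace p (of_nat (power_prod p k))"
  by (simp add: eigenspace_def Hn_eq_cspan_monomial_fun cspan_superset US_def monomial_fun_scale)

lemma inj_power_prod:
  assumes "inj p" and "\<And>j. prime (p j)"
  shows "inj (power_prod p)"
proof (rule injI)
  fix k k' assume eq: "power_prod p k = power_prod p k'"
  have "multiplicity (p i) (power_prod p k) = k i" for k i
  proof -
    have "power_prod p k = (\<Prod>q\<in>range p. q ^ k (inv p q))"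
      using \<open>inj p\<close> by (simp add: power_prod_def prod.reindex)
    also have "multiplicity (p i) \<dots> = k (inv p (p i))"
      using assms(2) by (subst multiplicity_prod_prime_powers) auto
    finally show ?thesis
      using \<open>inj p\<close> by simp
  qed
  with eq show "k = k'"
    by (metis ext)
qed

lemma of_nat_power_prod_eq_iff:
  assumes "inj p" and "\<And>j. prime (p j)"
  shows "(of_nat (power_prod p k) :: complex) = of_nat (power_prod p k') \<longleftrightarrow> k = k'"
  using inj_power_prod[OF assms] by (auto dest: injD)

lemma eigenvector_monomial_coeffs:
  fixes p :: "'n::finite \<Rightarrow> nat"
  assumes "inj p" and "\<And>j. prime (p j)" and "finite K"
    and F: "F = (\<lambda>m. \<Sum>k\<in>K. c k * monomial_fun k m)"
    and eigen: "US p F = (\<lambda>m. \<mu> * F m)"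
  shows "\<forall>k\<in>K. c k = 0 \<or> of_nat (power_prod p k) = \<mu>"
proof -
  let ?ev = "\<lambda>k. of_nat (power_prod p k) :: complex"
  have "\<forall>k\<in>K. c k * (?ev k - \<mu>) = 0"
  proof (rule eigenfunctions_independent[where l = ?ev and v = monomial_fun
        and \<sigma> = "\<lambda>m j. p j * m j" and c = "\<lambda>k. c k * (?ev k - \<mu>)"])
    show "finite K"
      by fact
    show "inj_on ?ev K"
      by (rule inj_onI) (simp only: of_nat_power_prod_eq_iff[OF assms(1,2)])
    show "monomial_fun k (\<lambda>j. p j * m j) = ?ev k * monomial_fun k m" for k m
      by (rule monomial_fun_scale)
    show "monomial_fun k \<noteq> (\<lambda>_. 0)" for k :: "'n \<Rightarrow> nat"
      by (rule monomial_fun_nonzero)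
    show "(\<Sum>k\<in>K. c k * (?ev k - \<mu>) * monomial_fun k m) = 0" for m
    proof -
      have "US p F m = (\<Sum>k\<in>K. c k * (?ev k * monomial_fun k m))"
        by (simp add: F US_def monomial_fun_scale)
      then have "(\<Sum>k\<in>K. c k * (?ev k - \<mu>) * monomial_fun k m) = US p F m - \<mu> * F m"
        by (simp add: F algebra_simps sum_distrib_left sum_subtractf)
      also have "\<dots> = 0"
        using eigen by simp
      finally show ?thesis .
    qed
  qed
  then show ?thesis
    by simp
qed

lemma eigenvector_US_is_monomial_fun:
  fixes p :: "'n::finite \<Rightarrow> nat"
  assumes "inj p" and "\<And>j. prime (p j)"
    and "F \<in> eigenspace p \<mu>" and "F \<noteq> (\<lambda>_. 0)"
  obtains k c where "\<mu> = of_nat (power_prod p k)" and "F = (\<lambda>m. c * monomial_fun k m)"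
proof -
  have "F \<in> cspan (range monomial_fun)" and eigen: "US p F = (\<lambda>m. \<mu> * F m)"
    using assms(3) by (auto simp: eigenspace_def Hn_eq_cspan_monomial_fun)
  then obtain K c where "finite K" and F: "F = (\<lambda>m. \<Sum>k\<in>K. c k * monomial_fun k m)"
    by (auto elim: cspan_imageE)
  note vanish = eigenvector_monomial_coeffs[OF assms(1,2) \<open>finite K\<close> F eigen]
  obtain k0 where "k0 \<in> K" and "c k0 \<noteq> 0"
    using assms(4) F by force
  with vanish have \<mu>: "\<mu> = of_nat (power_prod p k0)"
    by force
  have "c k = 0" if "k \<in> K" and "k \<noteq> k0" for k
    using vanish that \<mu> of_nat_power_prod_eq_iff[OF assms(1,2)] by auto
  then have "F m = c k0 * monomial_fun k0 m" for m
    using \<open>finite K\<close> \<open>k0 \<in> K\<close> by (simp add: F sum.remove)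
  with \<mu> that show thesis
    by blast
qed

lemma spectrum_US_eq_range_power_prod:
  fixes p :: "'n::finite \<Rightarrow> nat"
  assumes "inj p" and "\<And>j. prime (p j)"
  shows "spectrum_US p = range (\<lambda>k. of_nat (power_prod p k))"
proof
  show "spectrum_US p \<subseteq> range (\<lambda>k. of_nat (power_prod p k))"
  proof
    fix \<mu> assume "\<mu> \<in> spectrum_US p"
    then obtain F where "F \<in> eigenspace p \<mu>" and "F \<noteq> (\<lambda>_. 0)"
      by (auto simp: spectrum_US_def)
    then show "\<mu> \<in> range (\<lambda>k. of_nat (power_prod p k))"
      by (metis eigenvector_US_is_monomial_fun[OF assms] rangeI)
  qed
  show "range (\<lambda>k. of_nat (power_prod p k)) \<subseteq> spectrum_US p"
    using monomial_fun_in_eigenspace monomial_fun_nonzero by (auto simp: spectrum_US_def)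
qed

lemma eigenspace_US_power_prod:
  fixes p :: "'n::finite \<Rightarrow> nat"
  assumes "inj p" and "\<And>j. prime (p j)"
    and F: "F \<in> eigenspace p (of_nat (power_prod p k))"
  shows "\<exists>c. F = (\<lambda>m. c * monomial_fun k m)"
proof (cases "F = (\<lambda>_. 0)")
  case True
  then show ?thesis
    by (intro exI[of _ 0]) simp
next
  case False
  then obtain k' c where "of_nat (power_prod p k) = (of_nat (power_prod p k') :: complex)"
    and "F = (\<lambda>m. c * monomial_fun k' m)"
    using eigenvector_US_is_monomial_fun[OF assms(1,2) F] by blast
  then show ?thesis
    using of_nat_power_prod_eq_iff[OF assms(1,2)] by auto
qed

theorem mainTheorem18:
  fixes p :: "'n::finite \<Rightarrow> nat"
  assumes "inj p" and "\<And>j. prime (p j)"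
  shows "spectrum_US p = {of_nat (\<Prod>j\<in>UNIV. p j ^ k j) | k. True} \<and>
         (\<forall>mu \<in> spectrum_US p.
            \<exists>F0 \<in> eigenspace p mu. F0 \<noteq> (\<lambda>_. 0) \<and> (\<forall>F \<in> eigenspace p mu. \<exists>c. F = (\<lambda>m. c * F0 m)))"
proof -
  have eigenvalues: "{of_nat (\<Prod>j\<in>UNIV. p j ^ k j) | k. True}
      = range (\<lambda>k. of_nat (power_prod p k) :: complex)"
    by (auto simp: power_prod_def)
  show ?thesis
    unfolding spectrum_US_eq_range_power_prod[OF assms] eigenvalues
    using monomial_fun_in_eigenspace monomial_fun_nonzero eigenspace_US_power_prod[OF assms]
    by blast
qed

end
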